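(* Let $r\ge 3$ be a prime power and let $q=r^2$. If there exist Hermitian self-orthogonal linear codes over $\mathbb{F}_q$ with parameters $[m,k_1,d_1]_q$ and $[m,k_2,d_2]_q$, then there exists a Hermitian self-orthogonal linear code over $\mathbb{F}_q$ with parameters $[2m,k_1+k_2,d]_q$ where $d\ge\min\{2d_1,d_2\}$.
   Context: For $a\in\mathbb{F}_q$, $\overline{a}:=a^r$. The Hermitian inner product on $\mathbb{F}_q^n$ is $\langle u,v\rangle_H=\sum_i u_i\overline{v_i}$; a linear code $C$ is Hermitian self-orthogonal if $C\subseteq C^{\perp_H}$, where $C^{\perp_H}$ is its dual under this inner product. A code with parameters $[n,k,d]_q$ is a linear code of length $n$, dimension $k$ and minimum Hamming weight $d$ over $\mathbb{F}_q$. *)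

theory Defs
  imports "HOL-Number_Theory.Number_Theory" "HOL-Library.Function_Algebras"
begin

text \<open>Vectors of length n over a field 'a are modelled as functions nat => 'a
  vanishing outside {0..<n}; scalar multiplication is pointwise.\<close>

definition fscale :: "'a::field \<Rightarrow> (nat \<Rightarrow> 'a) \<Rightarrow> (nat \<Rightarrow> 'a)" where
  "fscale c v = (\<lambda>i. c * v i)"

definition vecs :: "nat \<Rightarrow> (nat \<Rightarrow> 'a::zero) set" where
  "vecs n = {v. \<forall>i\<ge>n. v i = 0}"

definition linear_code :: "nat \<Rightarrow> (nat \<Rightarrow> 'a::field) set \<Rightarrow> bool" where
  "linear_code n C \<longleftrightarrow> C \<subseteq> vecs n \<and> module.subspace fscale C"

definition code_dim :: "(nat \<Rightarrow> 'a::field) set \<Rightarrow> nat" where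
  "code_dim C = vector_space.dim fscale C"

definition hweight :: "nat \<Rightarrow> (nat \<Rightarrow> 'a::zero) \<Rightarrow> nat" where
  "hweight n v = card {i. i < n \<and> v i \<noteq> 0}"

definition has_min_weight :: "nat \<Rightarrow> (nat \<Rightarrow> 'a::zero) set \<Rightarrow> nat \<Rightarrow> bool" where
  "has_min_weight n C d \<longleftrightarrow>
     (\<exists>v\<in>C. v \<noteq> 0 \<and> hweight n v = d) \<and> (\<forall>v\<in>C. v \<noteq> 0 \<longrightarrow> d \<le> hweight n v)"

definition is_nkd_code :: "nat \<Rightarrow> nat \<Rightarrow> nat \<Rightarrow> (nat \<Rightarrow> 'a::field) set \<Rightarrow> bool" where
  "is_nkd_code n k d C \<longleftrightarrow> linear_code n C \<and> code_dim C = k \<and> has_min_weight n C d"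

text \<open>Hermitian inner product with conjugation a \<mapsto> a^r (q = r^2).\<close>
definition herm_ip :: "nat \<Rightarrow> nat \<Rightarrow> (nat \<Rightarrow> 'a::field) \<Rightarrow> (nat \<Rightarrow> 'a) \<Rightarrow> 'a" where
  "herm_ip r n u v = (\<Sum>i<n. u i * (v i) ^ r)"

definition herm_dual :: "nat \<Rightarrow> nat \<Rightarrow> (nat \<Rightarrow> 'a::field) set \<Rightarrow> (nat \<Rightarrow> 'a) set" where
  "herm_dual r n C = {v \<in> vecs n. \<forall>u\<in>C. herm_ip r n u v = 0}"

definition herm_self_orth :: "nat \<Rightarrow> nat \<Rightarrow> (nat \<Rightarrow> 'a::field) set \<Rightarrow> bool" where
  "herm_self_orth r n C \<longleftrightarrow> C \<subseteq> herm_dual r n C"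

end

theory Submission
  imports Defs "HOL-Computational_Algebra.Polynomial"
begin

text \<open>The new code consists of the words \<open>(u + v | a u + b v)\<close> with \<open>u \<in> C1\<close>, \<open>v \<in> C2\<close>,
  where \<open>a b^r = b a^r = -1\<close> and \<open>a \<noteq> b\<close>; such a pair exists because \<open>b^(r+1) = -1\<close> has at most
  \<open>r + 1 < r\<^sup>2 - 1\<close> solutions. Since \<open>x \<mapsto> x^r\<close> is additive, the Hermitian product of two
  such words is \<open>(1 + a a^r) \<langle>u, u'\<rangle> + (1 + b b^r) \<langle>v, v'\<rangle>\<close>, the cross terms carrying the
  factors \<open>1 + a b^r\<close> and \<open>1 + b a^r\<close>; hence self-orthogonality is inherited. Because
  \<open>(a - b) v = a (u + v) - (a u + b v)\<close>, a word determines \<open>(u, v)\<close>, which gives the dimension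
  by counting, and its weight is at least \<open>wt v \<ge> d2\<close> when \<open>v \<noteq> 0\<close>; when \<open>v = 0\<close> the word
  is \<open>(u | a u)\<close> of weight \<open>2 wt u \<ge> 2 d1\<close>.\<close>

lemma (in vector_space) card_subspace_eq_card_power_dim:
  assumes "subspace V" "finite V"
  shows "card V = card (UNIV :: 'a set) ^ dim V"
proof -
  obtain B where B: "B \<subseteq> V" "independent B" "V \<subseteq> span B" "card B = dim V"
    using basis_exists by blast
  have "finite B"
    using B(1) assms(2) finite_subset by blast
  have "span B = V"
    using span_minimal[OF B(1) assms(1)] B(3) by (rule equalityI)
  define comb where "comb u = (\<Sum>v\<in>B. u v *s v)" for u
  have "comb ` (B \<rightarrow>\<^sub>E UNIV) = V"
  proof -
    have "comb u = comb (restrict u B)" for u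
      unfolding comb_def by (intro sum.cong) auto
    then have "comb ` (B \<rightarrow>\<^sub>E UNIV) = range comb"
      by (auto intro!: image_eqI[where x = "restrict _ B"])
    also have "\<dots> = V"
      using span_finite[OF \<open>finite B\<close>] \<open>span B = V\<close> by (simp add: comb_def)
    finally show ?thesis .
  qed
  moreover have "inj_on comb (B \<rightarrow>\<^sub>E UNIV)"
  proof (rule inj_onI)
    fix u w assume u: "u \<in> B \<rightarrow>\<^sub>E UNIV" and w: "w \<in> B \<rightarrow>\<^sub>E UNIV" and "comb u = comb w"
    then have "(\<Sum>v\<in>B. (u v - w v) *s v) = 0"
      by (simp add: comb_def scale_left_diff_distrib sum_subtractf)
    then have "u v = w v" if "v \<in> B" for v
      using independentD[OF B(2) \<open>finite B\<close> order_refl, of "\<lambda>v. u v - w v"] that by simp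
    then show "u = w"
      using u w by (auto intro: PiE_ext)
  qed
  ultimately have "card V = card (B \<rightarrow>\<^sub>E (UNIV :: 'a set))"
    using card_image by fastforce
  then show ?thesis
    using B(4) \<open>finite B\<close> by (simp add: card_PiE)
qed

lemma freshmans_dream_primepow:
  fixes x y :: "'a::{finite,field}"
  assumes "primepow r" "card (UNIV :: 'a set) = r ^ n"
  shows "(x + y) ^ r = x ^ r + y ^ r"
proof -
  obtain p k where "prime p" "r = p ^ k"
    using assms(1) unfolding primepow_def by blast
  have "prime CHAR('a)"
    by (rule prime_CHAR_semidom, rule finite_imp_CHAR_pos) simp
  moreover have "CHAR('a) dvd p ^ (k * n)"
    using CHAR_dvd_CARD[where 'a = 'a] assms(2) \<open>r = p ^ k\<close> by (simp add: power_mult)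
  ultimately have "CHAR('a) = p"
    using \<open>prime p\<close> by (metis prime_dvd_power primes_dvd_imp_eq)
  then show ?thesis
    using \<open>prime p\<close> \<open>r = p ^ k\<close> by (intro freshmans_dream') simp_all
qed

lemma power_card_eq_self:
  fixes x :: "'a::{finite,field}"
  shows "x ^ card (UNIV :: 'a set) = x"
proof -
  obtain k where k: "card (UNIV :: 'a set) = Suc k"
    using finite_UNIV_card_ge_0[where 'a = 'a] gr0_implies_Suc by auto
  show ?thesis
  proof (cases "x = 0")
    case False
    let ?U = "UNIV - {0 :: 'a}"
    have "(\<Prod>y\<in>?U. x * y) = (\<Prod>y\<in>?U. y)"
      by (rule prod.reindex_bij_witness[of _ "\<lambda>y. y / x" "\<lambda>y. x * y"]) (use False in auto)
    moreover have "card ?U = k"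
      by (simp add: card_Diff_singleton k)
    ultimately have "x ^ k * \<Prod>?U = 1 * \<Prod>?U"
      by (simp add: prod.distrib)
    moreover have "\<Prod>?U \<noteq> 0"
      by simp
    ultimately have "x ^ k = 1"
      by simp
    then show ?thesis
      unfolding k by simp
  qed (unfold k, simp)
qed

lemma ex_power_Suc_neq_minus_one:
  fixes r :: nat
  assumes "r + 2 < card (UNIV :: 'a::{finite,field} set)"
  shows "\<exists>b :: 'a. b \<noteq> 0 \<and> b ^ (r + 1) \<noteq> -1"
proof (rule ccontr)
  assume no_b: "\<not> ?thesis"
  define P :: "'a poly" where "P = monom 1 (r + 1) + 1"
  have "degree P = r + 1"
    unfolding P_def by (subst degree_add_eq_left) (auto simp: degree_monom_eq)
  have "UNIV - {0} \<subseteq> {x. poly P x = 0}"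
    using no_b by (auto simp: P_def poly_monom)
  then have "card (UNIV - {0 :: 'a}) \<le> card {x. poly P x = 0}"
    by (intro card_mono) auto
  also have "\<dots> \<le> r + 1"
    using card_poly_roots_bound[of P] \<open>degree P = r + 1\<close> by fastforce
  finally show False
    using assms by (simp add: card_Diff_singleton)
qed

interpretation fscale: vector_space "fscale :: 'a::field \<Rightarrow> (nat \<Rightarrow> 'a) \<Rightarrow> _"
  by unfold_locales (auto simp: fscale_def algebra_simps)

lemma finite_vecs: "finite (vecs n :: (nat \<Rightarrow> 'a::{finite,zero}) set)"
proof (rule finite_subset)
  show "vecs n \<subseteq> (\<lambda>f i. if i < n then f i else 0) ` ({..<n} \<rightarrow>\<^sub>E (UNIV :: 'a set))"
  proof
    fix v :: "nat \<Rightarrow> 'a" assume "v \<in> vecs n"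
    then have "v = (\<lambda>i. if i < n then restrict v {..<n} i else 0)"
      by (auto simp: vecs_def fun_eq_iff)
    then show "v \<in> (\<lambda>f i. if i < n then f i else 0) ` ({..<n} \<rightarrow>\<^sub>E UNIV)"
      by (rule image_eqI[where x = "restrict v {..<n}"]) simp
  qed
qed (intro finite_imageI finite_PiE; simp)

lemma hweight_fscale:
  "c \<noteq> 0 \<Longrightarrow> hweight n (fscale c x) = hweight n (x :: nat \<Rightarrow> 'a::field)"
  by (simp add: hweight_def fscale_def)

lemma hweight_fscale_le: "hweight n (fscale c x) \<le> hweight n (x :: nat \<Rightarrow> 'a::field)"
  unfolding hweight_def fscale_def by (intro card_mono) auto

lemma hweight_diff_le:
  "hweight n (x - y) \<le> hweight n x + hweight n (y :: nat \<Rightarrow> 'a::ab_group_add)"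
proof -
  have "{i. i < n \<and> (x - y) i \<noteq> 0} \<subseteq> {i. i < n \<and> x i \<noteq> 0} \<union> {i. i < n \<and> y i \<noteq> 0}"
    by auto
  then have "hweight n (x - y) \<le> card ({i. i < n \<and> x i \<noteq> 0} \<union> {i. i < n \<and> y i \<noteq> 0})"
    unfolding hweight_def by (intro card_mono) auto
  also have "\<dots> \<le> hweight n x + hweight n y"
    unfolding hweight_def by (rule card_Un_le)
  finally show ?thesis .
qed

lemma has_min_weight_exists:
  assumes "v \<in> C" "v \<noteq> 0"
  shows "\<exists>d. has_min_weight n C d"
proof -
  let ?P = "\<lambda>d. \<exists>v\<in>C. v \<noteq> 0 \<and> hweight n v = d"
  have "?P (Least ?P)"
    by (rule LeastI[of _ "hweight n v"]) (use assms in blast)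
  moreover have "\<forall>v\<in>C. v \<noteq> 0 \<longrightarrow> Least ?P \<le> hweight n v"
    by (blast intro: Least_le)
  ultimately show ?thesis
    unfolding has_min_weight_def by blast
qed

lemma has_min_weight_ge:
  "has_min_weight n C d \<Longrightarrow> (\<And>v. v \<in> C \<Longrightarrow> v \<noteq> 0 \<Longrightarrow> e \<le> hweight n v) \<Longrightarrow> e \<le> d"
  unfolding has_min_weight_def by blast

definition glue :: "nat \<Rightarrow> (nat \<Rightarrow> 'a) \<Rightarrow> (nat \<Rightarrow> 'a) \<Rightarrow> nat \<Rightarrow> 'a" where
  "glue m x y i = (if i < m then x i else y (i - m))"

lemma glue_inject:
  assumes "x \<in> vecs m" "y \<in> vecs m" "x' \<in> vecs m" "y' \<in> vecs m"
  shows "glue m x y = glue m x' y' \<longleftrightarrow> x = x' \<and> y = y'"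
proof
  assume eq: "glue m x y = glue m x' y'"
  have "x i = x' i \<and> y i = y' i" for i
  proof (cases "i < m")
    case True
    then show ?thesis
      using fun_cong[OF eq, of i] fun_cong[OF eq, of "i + m"] by (simp add: glue_def)
  next
    case False
    then show ?thesis
      using assms by (simp add: vecs_def)
  qed
  then show "x = x' \<and> y = y'"
    by (simp add: fun_eq_iff)
qed simp

lemma sum_lessThan_double:
  fixes m :: nat
  shows "(\<Sum>i<2 * m. f i) = (\<Sum>i<m. f i) + (\<Sum>i<m. f (i + m) :: 'b::comm_monoid_add)"
proof -
  have "(\<Sum>i<2 * m. f i) = (\<Sum>i=0..<m. f i) + (\<Sum>i=0+m..<m+m. f i)"
    by (simp add: mult_2 sum.atLeastLessThan_concat lessThan_atLeast0)
  then show ?thesis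
    by (simp only: sum.shift_bounds_nat_ivl lessThan_atLeast0)
qed

lemma herm_ip_glue:
  "herm_ip r (2 * m) (glue m x y) (glue m x' y') = herm_ip r m x x' + herm_ip r m y y'"
  unfolding herm_ip_def sum_lessThan_double by (simp add: glue_def)

lemma hweight_glue: "hweight (2 * m) (glue m x y) = hweight m x + hweight m y"
proof -
  let ?X = "{i. i < m \<and> x i \<noteq> 0}" and ?Y = "{i. i < m \<and> y i \<noteq> 0}"
  have split: "{i. i < 2 * m \<and> glue m x y i \<noteq> 0} = ?X \<union> (\<lambda>i. i + m) ` ?Y"
  proof (intro equalityI subsetI)
    fix i assume "i \<in> {i. i < 2 * m \<and> glue m x y i \<noteq> 0}"
    then show "i \<in> ?X \<union> (\<lambda>i. i + m) ` ?Y"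
      by (cases "i < m") (auto simp: glue_def image_iff intro!: exI[of _ "i - m"])
  qed (auto simp: glue_def)
  have "card (?X \<union> (\<lambda>i. i + m) ` ?Y) = card ?X + card ((\<lambda>i. i + m) ` ?Y)"
    by (rule card_Un_disjoint) auto
  also have "card ((\<lambda>i. i + m) ` ?Y) = card ?Y"
    by (rule card_image) (simp add: inj_on_def)
  finally show ?thesis
    unfolding hweight_def split .
qed

lemma glue_in_vecs: "x \<in> vecs m \<Longrightarrow> y \<in> vecs m \<Longrightarrow> glue m x y \<in> vecs (2 * m)"
  by (simp add: vecs_def glue_def)

lemma subspace_vecs: "fscale.subspace (vecs n :: (nat \<Rightarrow> 'a::field) set)"
  by (auto simp: fscale.subspace_def vecs_def fscale_def)

definition mix :: "nat \<Rightarrow> 'a::field \<Rightarrow> 'a \<Rightarrow> (nat \<Rightarrow> 'a) \<Rightarrow> (nat \<Rightarrow> 'a) \<Rightarrow> nat \<Rightarrow> 'a" where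
  "mix m a b u v = glue m (u + v) (fscale a u + fscale b v)"

definition mix_code ::
    "nat \<Rightarrow> 'a::field \<Rightarrow> 'a \<Rightarrow> (nat \<Rightarrow> 'a) set \<Rightarrow> (nat \<Rightarrow> 'a) set \<Rightarrow> (nat \<Rightarrow> 'a) set" where
  "mix_code m a b C1 C2 = (\<lambda>(u, v). mix m a b u v) ` (C1 \<times> C2)"

lemma mix_add: "mix m a b u v + mix m a b u' v' = mix m a b (u + u') (v + v')"
  by (simp add: mix_def glue_def fscale_def fun_eq_iff algebra_simps)

lemma fscale_mix: "fscale c (mix m a b u v) = mix m a b (fscale c u) (fscale c v)"
  by (simp add: mix_def glue_def fscale_def fun_eq_iff algebra_simps)

lemma mix_zero: "mix m a b 0 0 = 0"
  by (simp add: mix_def glue_def fscale_def fun_eq_iff)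

lemma mix_in_vecs: "u \<in> vecs m \<Longrightarrow> v \<in> vecs m \<Longrightarrow> mix m a b u v \<in> vecs (2 * m)"
  unfolding mix_def
  by (intro glue_in_vecs subspace_vecs[THEN fscale.subspace_add]
      subspace_vecs[THEN fscale.subspace_scale])

lemma linear_code_mix_code:
  assumes "linear_code m C1" "linear_code m C2"
  shows "linear_code (2 * m) (mix_code m a b C1 C2)"
  unfolding linear_code_def
proof
  show "mix_code m a b C1 C2 \<subseteq> vecs (2 * m)"
    using assms by (auto simp: mix_code_def linear_code_def intro: mix_in_vecs)
  have S1: "fscale.subspace C1" and S2: "fscale.subspace C2"
    using assms by (simp_all add: linear_code_def)
  show "fscale.subspace (mix_code m a b C1 C2)"
  proof (rule fscale.subspaceI)
    show "0 \<in> mix_code m a b C1 C2"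
      unfolding mix_code_def
      by (rule image_eqI[where x = "(0, 0)"]) (simp_all add: mix_zero S1 S2 fscale.subspace_0)
  next
    fix x y assume "x \<in> mix_code m a b C1 C2" "y \<in> mix_code m a b C1 C2"
    then show "x + y \<in> mix_code m a b C1 C2"
      using S1 S2 by (force simp: mix_code_def mix_add fscale.subspace_add)
  next
    fix c x assume "x \<in> mix_code m a b C1 C2"
    then show "fscale c x \<in> mix_code m a b C1 C2"
      using S1 S2 by (force simp: mix_code_def fscale_mix fscale.subspace_scale)
  qed
qed

lemma inj_on_mix:
  assumes "a \<noteq> b"
  shows "inj_on (\<lambda>(u, v). mix m a b u v) (vecs m \<times> vecs m)"
proof (rule inj_onI, clarify)
  fix u v u' v' assume vecs: "u \<in> vecs m" "v \<in> vecs m" "u' \<in> vecs m" "v' \<in> vecs m"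
    and "mix m a b u v = mix m a b u' v'"
  then have sum_eq: "u + v = u' + v'" and comb_eq: "fscale a u + fscale b v = fscale a u' + fscale b v'"
    unfolding mix_def
    by (simp_all add: glue_inject subspace_vecs[THEN fscale.subspace_add]
        subspace_vecs[THEN fscale.subspace_scale])
  have "fscale (a - b) w' = fscale a (w + w') - (fscale a w + fscale b w')" for w w'
    by (simp add: fscale_def fun_eq_iff algebra_simps)
  then have "fscale (a - b) v = fscale (a - b) v'"
    by (metis sum_eq comb_eq add.commute)
  then have "v = v'"
    using assms by simp
  then show "u = u' \<and> v = v'"
    using sum_eq by simp
qed

lemma card_mix_code:
  assumes "a \<noteq> b" "C1 \<subseteq> vecs m" "C2 \<subseteq> vecs m"
  shows "card (mix_code m a b C1 C2) = card C1 * card C2"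
proof -
  have "inj_on (\<lambda>(u, v). mix m a b u v) (C1 \<times> C2)"
    by (rule inj_on_subset[OF inj_on_mix[OF assms(1)]]) (use assms(2,3) in auto)
  then show ?thesis
    unfolding mix_code_def by (simp add: card_image card_cartesian_product)
qed

lemma card_eq_card_power_code_dim:
  fixes C :: "(nat \<Rightarrow> 'a::{finite,field}) set"
  assumes "linear_code n C"
  shows "card C = card (UNIV :: 'a set) ^ code_dim C"
proof -
  have "finite C"
    using assms finite_vecs unfolding linear_code_def by (rule finite_subset[OF conjunct1])
  then show ?thesis
    using assms unfolding linear_code_def code_dim_def
    by (intro fscale.card_subspace_eq_card_power_dim) simp_all
qed

lemma code_dim_mix_code:
  fixes C1 C2 :: "(nat \<Rightarrow> 'a::{finite,field}) set"
  assumes "linear_code m C1" "linear_code m C2" "a \<noteq> b"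
  shows "code_dim (mix_code m a b C1 C2) = code_dim C1 + code_dim C2"
proof -
  have "card (UNIV :: 'a set) ^ code_dim (mix_code m a b C1 C2) = card (mix_code m a b C1 C2)"
    by (rule card_eq_card_power_code_dim[OF linear_code_mix_code[OF assms(1,2)], symmetric])
  also have "\<dots> = card C1 * card C2"
    using assms by (intro card_mix_code) (simp_all add: linear_code_def)
  also have "\<dots> = card (UNIV :: 'a set) ^ (code_dim C1 + code_dim C2)"
    by (simp add: card_eq_card_power_code_dim[OF assms(1)] card_eq_card_power_code_dim[OF assms(2)]
        power_add)
  finally have "card (UNIV :: 'a set) ^ code_dim (mix_code m a b C1 C2)
      = card (UNIV :: 'a set) ^ (code_dim C1 + code_dim C2)" .
  moreover have "1 < card (UNIV :: 'a set)"
    using card_mono[of UNIV "{0, 1 :: 'a}"] by simp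
  ultimately show ?thesis
    by (simp add: power_inject_exp)
qed

lemma herm_ip_mix:
  fixes a b :: "'a::field"
  assumes additive: "\<And>x y :: 'a. (x + y) ^ r = x ^ r + y ^ r"
    and "a * b ^ r = -1" "b * a ^ r = -1"
  shows "herm_ip r (2 * m) (mix m a b u v) (mix m a b u' v')
    = (1 + a * a ^ r) * herm_ip r m u u' + (1 + b * b ^ r) * herm_ip r m v v'"
proof -
  have pointwise: "(u i + v i) * (u' i + v' i) ^ r + (a * u i + b * v i) * (a * u' i + b * v' i) ^ r
      = (1 + a * a ^ r) * (u i * u' i ^ r) + (1 + b * b ^ r) * (v i * v' i ^ r)" for i
  proof -
    have "(u i + v i) * (u' i + v' i) ^ r + (a * u i + b * v i) * (a * u' i + b * v' i) ^ r
        = (1 + a * a ^ r) * (u i * u' i ^ r) + (1 + b * b ^ r) * (v i * v' i ^ r)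
          + (1 + a * b ^ r) * (u i * v' i ^ r) + (1 + b * a ^ r) * (v i * u' i ^ r)"
      by (simp add: additive power_mult_distrib algebra_simps)
    then show ?thesis
      using assms(2,3) by simp
  qed
  show ?thesis
    unfolding mix_def herm_ip_glue
    by (simp add: herm_ip_def fscale_def pointwise sum.distrib sum_distrib_left flip: sum.distrib)
qed

lemma herm_self_orth_mix_code:
  fixes a b :: "'a::field"
  assumes "\<And>x y :: 'a. (x + y) ^ r = x ^ r + y ^ r" "a * b ^ r = -1" "b * a ^ r = -1"
    and "linear_code m C1" "linear_code m C2"
    and "herm_self_orth r m C1" "herm_self_orth r m C2"
  shows "herm_self_orth r (2 * m) (mix_code m a b C1 C2)"
proof -
  have "herm_ip r m u u' = 0" if "u \<in> C1" "u' \<in> C1" for u u'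
    using assms(6) that unfolding herm_self_orth_def herm_dual_def by blast
  moreover have "herm_ip r m v v' = 0" if "v \<in> C2" "v' \<in> C2" for v v'
    using assms(7) that unfolding herm_self_orth_def herm_dual_def by blast
  ultimately have "herm_ip r (2 * m) x y = 0"
    if "x \<in> mix_code m a b C1 C2" "y \<in> mix_code m a b C1 C2" for x y
    using that unfolding mix_code_def by (auto simp: herm_ip_mix[OF assms(1-3)])
  moreover have "mix_code m a b C1 C2 \<subseteq> vecs (2 * m)"
    using linear_code_mix_code[OF assms(4,5)] by (simp add: linear_code_def)
  ultimately show ?thesis
    unfolding herm_self_orth_def herm_dual_def by blast
qed

lemma hweight_mix_zero:
  "a \<noteq> 0 \<Longrightarrow> hweight (2 * m) (mix m a b u 0) = 2 * hweight m u"
  by (simp add: mix_def hweight_glue hweight_fscale fscale_def[of b])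

lemma hweight_mix_ge:
  assumes "a \<noteq> b"
  shows "hweight m v \<le> hweight (2 * m) (mix m a b u v)"
proof -
  have "fscale a (u + v) - (fscale a u + fscale b v) = fscale (a - b) v"
    by (simp add: fscale_def fun_eq_iff algebra_simps)
  then have "hweight m v = hweight m (fscale a (u + v) - (fscale a u + fscale b v))"
    using assms by (simp add: hweight_fscale)
  also have "\<dots> \<le> hweight m (fscale a (u + v)) + hweight m (fscale a u + fscale b v)"
    by (rule hweight_diff_le)
  also have "\<dots> \<le> hweight m (u + v) + hweight m (fscale a u + fscale b v)"
    using hweight_fscale_le by (rule add_right_mono)
  also have "\<dots> = hweight (2 * m) (mix m a b u v)"
    by (simp add: mix_def hweight_glue)
  finally show ?thesis .
qed

lemma min_weight_mix_code:
  assumes "linear_code m C1" "linear_code m C2" "a \<noteq> 0" "a \<noteq> b"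
    and "has_min_weight m C1 d1" "has_min_weight m C2 d2"
  shows "\<exists>d. has_min_weight (2 * m) (mix_code m a b C1 C2) d \<and> min (2 * d1) d2 \<le> d"
proof -
  have "C1 \<subseteq> vecs m" "0 \<in> C2"
    using assms(1,2) by (simp_all add: linear_code_def fscale.subspace_0)
  obtain u where "u \<in> C1" "u \<noteq> 0"
    using assms(5) unfolding has_min_weight_def by blast
  have "mix m a b u 0 \<in> mix_code m a b C1 C2"
    unfolding mix_code_def by (rule image_eqI[where x = "(u, 0)"]) (simp_all add: \<open>u \<in> C1\<close> \<open>0 \<in> C2\<close>)
  moreover have "mix m a b u 0 \<noteq> 0"
  proof -
    have "u \<in> vecs m" "(0 :: nat \<Rightarrow> _) \<in> vecs m"
      using \<open>u \<in> C1\<close> \<open>C1 \<subseteq> vecs m\<close> by (auto simp: vecs_def)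
    then show ?thesis
      using inj_on_eq_iff[OF inj_on_mix[OF assms(4), of m], of "(u, 0)" "(0, 0)"] \<open>u \<noteq> 0\<close>
      by (simp add: mix_zero)
  qed
  ultimately obtain d where d: "has_min_weight (2 * m) (mix_code m a b C1 C2) d"
    using has_min_weight_exists by blast
  have weight_bound: "min (2 * d1) d2 \<le> hweight (2 * m) (mix m a b u v)"
    if "u \<in> C1" "v \<in> C2" "mix m a b u v \<noteq> 0" for u v
  proof (cases "v = 0")
    case True
    then have "u \<noteq> 0"
      using that(3) mix_zero by auto
    then have "d1 \<le> hweight m u"
      using assms(5) that(1) unfolding has_min_weight_def by blast
    then show ?thesis
      using True hweight_mix_zero[OF assms(3)] by simp
  next
    case False
    then have "d2 \<le> hweight m v"
      using assms(6) that(2) unfolding has_min_weight_def by blast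
    also have "hweight m v \<le> hweight (2 * m) (mix m a b u v)"
      by (rule hweight_mix_ge[OF assms(4)])
    finally show ?thesis
      by simp
  qed
  have "min (2 * d1) d2 \<le> d"
  proof (rule has_min_weight_ge[OF d])
    fix w assume "w \<in> mix_code m a b C1 C2" "w \<noteq> 0"
    then show "min (2 * d1) d2 \<le> hweight (2 * m) w"
      unfolding mix_code_def using weight_bound by auto
  qed
  with d show ?thesis
    by blast
qed

lemma ex_hermitian_mixing_pair:
  fixes r :: nat
  assumes "primepow r" "3 \<le> r" "card (UNIV :: 'a::{finite,field} set) = r ^ 2"
  obtains a b :: "'a::{finite,field}" where "a \<noteq> 0" "a \<noteq> b" "a * b ^ r = -1" "b * a ^ r = -1"
proof -
  have additive: "(x + y) ^ r = x ^ r + y ^ r" for x y :: 'a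
    using freshmans_dream_primepow[OF assms(1,3)] .
  have "3 * r \<le> r * r"
    using assms(2) by (rule mult_right_mono) simp
  then have "r + 2 < r ^ 2"
    using assms(2) unfolding power2_eq_square by linarith
  obtain b :: 'a where "b \<noteq> 0" "b ^ (r + 1) \<noteq> -1"
    using ex_power_Suc_neq_minus_one \<open>r + 2 < r ^ 2\<close> assms(3) by metis
  define a where "a = - inverse (b ^ r)"
  have "1 + (-1 :: 'a) ^ r = (1 + (-1)) ^ r"
    by (simp only: additive power_one)
  also have "\<dots> = 0"
    using assms(2) by simp
  finally have minus_one_power: "(-1 :: 'a) ^ r = -1"
    by (metis neg_eq_iff_add_eq_0)
  have "a = (-1) * inverse (b ^ r)"
    by (simp add: a_def)
  then have "a ^ r = (-1) ^ r * inverse ((b ^ r) ^ r)"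
    by (simp only: power_mult_distrib power_inverse)
  also have "\<dots> = - inverse ((b ^ r) ^ r)"
    by (simp add: minus_one_power)
  also have "(b ^ r) ^ r = b"
    using power_card_eq_self[of b] assms(3) by (simp add: power2_eq_square power_mult)
  finally have "b * a ^ r = -1"
    using \<open>b \<noteq> 0\<close> by simp
  moreover have "a * b ^ r = -1"
    using \<open>b \<noteq> 0\<close> by (simp add: a_def)
  moreover have "a \<noteq> b"
    using \<open>a * b ^ r = -1\<close> \<open>b ^ (r + 1) \<noteq> -1\<close> by (auto simp: power_Suc2 mult.commute)
  moreover have "a \<noteq> 0"
    using \<open>b \<noteq> 0\<close> by (simp add: a_def)
  ultimately show ?thesis
    using that by blast
qed

theorem corollary4p1:
  fixes r m k1 k2 d1 d2 :: nat
    and C1 C2 :: "(nat \<Rightarrow> 'a::{finite,field}) set"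
  assumes "primepow r" and "r \<ge> 3" and "card (UNIV :: 'a set) = r ^ 2"
    and "is_nkd_code m k1 d1 C1" and "herm_self_orth r m C1"
    and "is_nkd_code m k2 d2 C2" and "herm_self_orth r m C2"
  shows "\<exists>(C :: (nat \<Rightarrow> 'a) set) d. is_nkd_code (2 * m) (k1 + k2) d C
           \<and> herm_self_orth r (2 * m) C \<and> d \<ge> min (2 * d1) d2"
proof -
  obtain a b :: 'a where ab: "a \<noteq> 0" "a \<noteq> b" "a * b ^ r = -1" "b * a ^ r = -1"
    using ex_hermitian_mixing_pair assms(1-3) by blast
  have codes: "linear_code m C1" "linear_code m C2"
    using assms(4,6) by (simp_all add: is_nkd_code_def)
  let ?C = "mix_code m a b C1 C2"
  obtain d where d: "has_min_weight (2 * m) ?C d" "min (2 * d1) d2 \<le> d"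
    using min_weight_mix_code[OF codes ab(1,2)] assms(4,6) by (auto simp: is_nkd_code_def)
  have "is_nkd_code (2 * m) (k1 + k2) d ?C"
    using linear_code_mix_code[OF codes] code_dim_mix_code[OF codes ab(2)] d(1) assms(4,6)
    by (simp add: is_nkd_code_def)
  moreover have "herm_self_orth r (2 * m) ?C"
    using herm_self_orth_mix_code[OF freshmans_dream_primepow[OF assms(1,3)] ab(3,4) codes assms(5,7)] .
  ultimately show ?thesis
    using d(2) by blast
qed

end
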